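(* Let $p$ be a prime, let $h_1,h_2$ be relatively prime positive integers, $h=h_1+h_2$, and let $F$ be the 2-dimensional Lubin–Tate formal group over $\mathbb{Z}_p$ associated with $(h_1,h_2)$. Then its multiplication-by-$p$ endomorphism satisfies $$[p]_F(x_1,x_2)\equiv(px_1,px_2)\ \text{mod degree 2 terms}\quad\text{and}\quad [p]_F(x_1,x_2)\equiv\big(x_2^{p^{h_1}},x_1^{p^{h_2}}\big)\ \text{mod } p.$$ In particular $[p]_F$ belongs to the set $\mathcal{C}^{h_1,h_2}_{LT}$ of pairs $f(X)\in\mathbb{Z}_p[[x_1,x_2]]^2$ with $f(X)\equiv(px_1,px_2)$ mod degree 2 and $f(X)$ mod $p$ equal to $(x_1^{p^{h_1}},x_2^{p^{h_2}})$ or $(x_2^{p^{h_1}},x_1^{p^{h_2}})$.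
   Context: Let $L=(L_1,L_2)\in\mathbb{Q}_p[[x_1,x_2]]^2$ be given by $L_1=x_1+\sum_{k\ge1}p^{-2k}x_1^{p^{kh}}+\sum_{k\ge0}p^{-(2k+1)}x_2^{p^{h_1+kh}}$ and $L_2=x_2+\sum_{k\ge1}p^{-2k}x_2^{p^{kh}}+\sum_{k\ge0}p^{-(2k+1)}x_1^{p^{h_2+kh}}$. Its Jacobian at $0$ is the identity, so it has a compositional inverse $L^{-1}$, and the 2-dimensional Lubin–Tate formal group associated with $(h_1,h_2)$ is $F(X,Y)=L^{-1}(L(X)+L(Y))$, a 2-dimensional formal group with coefficients in $\mathbb{Z}_p$. The maps $[k]_F$ are defined by $[0]_F(X)=0$, $[1]_F(X)=X$, $[k]_F(X)=F(X,[k-1]_F(X))$ for $k\ge2$. *)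

theory Defs
  imports Complex_Main "HOL-Computational_Algebra.Primes"
begin

text \<open>Formal power series in two variables x1, x2 with rational coefficients,
  represented by their coefficient function: f i j is the coefficient of x1^i x2^j.
  All series in the statement (L, its inverse, F, [k]_F) have coefficients in
  the subfield Q of Q_p, so we work over Q; membership in Z_p for a rational
  number means p does not divide its denominator.\<close>

type_synonym ps2 = "nat \<Rightarrow> nat \<Rightarrow> rat"
type_synonym ps2pair = "ps2 \<times> ps2"

definition ps_zero :: ps2 where "ps_zero = (\<lambda>i j. 0)"
definition ps_one :: ps2 where "ps_one = (\<lambda>i j. if i = 0 \<and> j = 0 then 1 else 0)"
definition ps_X1 :: ps2 where "ps_X1 = (\<lambda>i j. if i = 1 \<and> j = 0 then 1 else 0)"
definition ps_X2 :: ps2 where "ps_X2 = (\<lambda>i j. if i = 0 \<and> j = 1 then 1 else 0)"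
definition ps_add :: "ps2 \<Rightarrow> ps2 \<Rightarrow> ps2" where "ps_add f g = (\<lambda>i j. f i j + g i j)"
definition ps_smult :: "rat \<Rightarrow> ps2 \<Rightarrow> ps2" where "ps_smult c f = (\<lambda>i j. c * f i j)"
definition ps_mult :: "ps2 \<Rightarrow> ps2 \<Rightarrow> ps2" where
  "ps_mult f g = (\<lambda>i j. \<Sum>a\<le>i. \<Sum>b\<le>j. f a b * g (i - a) (j - b))"
definition ps_pow :: "ps2 \<Rightarrow> nat \<Rightarrow> ps2" where
  "ps_pow f n = ((ps_mult f) ^^ n) ps_one"

text \<open>Substitution f(g1,g2), meaningful when g1, g2 have zero constant term:
  only monomials x1^a x2^b of f with a+b \<le> i+j contribute to the coefficient of x1^i x2^j.\<close>
definition ps_comp :: "ps2 \<Rightarrow> ps2 \<Rightarrow> ps2 \<Rightarrow> ps2" where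
  "ps_comp f g1 g2 = (\<lambda>i j. \<Sum>a\<le>i+j. \<Sum>b\<le>i+j. f a b * ps_mult (ps_pow g1 a) (ps_pow g2 b) i j)"

definition pp_X :: ps2pair where "pp_X = (ps_X1, ps_X2)"
definition pp_zero :: ps2pair where "pp_zero = (ps_zero, ps_zero)"
definition pp_add :: "ps2pair \<Rightarrow> ps2pair \<Rightarrow> ps2pair" where
  "pp_add F G = (ps_add (fst F) (fst G), ps_add (snd F) (snd G))"
definition pp_comp :: "ps2pair \<Rightarrow> ps2pair \<Rightarrow> ps2pair" where
  "pp_comp F G = (ps_comp (fst F) (fst G) (snd G), ps_comp (snd F) (fst G) (snd G))"

text \<open>The coefficient of x1^i x2^j collects the
  (finitely many, in fact at most one) terms of the defining infinite sums with
  this exponent; the bounds k \<le> i, k \<le> j are harmless since p^(kh) > k.\<close>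
definition LT_L1 :: "nat \<Rightarrow> nat \<Rightarrow> nat \<Rightarrow> ps2" where
  "LT_L1 p h1 h2 = (\<lambda>i j. let h = h1 + h2 in
      (if i = 1 \<and> j = 0 then 1 else 0)
    + (\<Sum>k\<in>{1..i}. if i = p ^ (k * h) \<and> j = 0 then 1 / of_nat p ^ (2 * k) else 0)
    + (\<Sum>k\<in>{0..j}. if i = 0 \<and> j = p ^ (h1 + k * h) then 1 / of_nat p ^ (2 * k + 1) else 0))"

definition LT_L2 :: "nat \<Rightarrow> nat \<Rightarrow> nat \<Rightarrow> ps2" where
  "LT_L2 p h1 h2 = (\<lambda>i j. let h = h1 + h2 in
      (if i = 0 \<and> j = 1 then 1 else 0)
    + (\<Sum>k\<in>{1..j}. if j = p ^ (k * h) \<and> i = 0 then 1 / of_nat p ^ (2 * k) else 0)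
    + (\<Sum>k\<in>{0..i}. if j = 0 \<and> i = p ^ (h2 + k * h) then 1 / of_nat p ^ (2 * k + 1) else 0))"

definition LT_L :: "nat \<Rightarrow> nat \<Rightarrow> nat \<Rightarrow> ps2pair" where
  "LT_L p h1 h2 = (LT_L1 p h1 h2, LT_L2 p h1 h2)"

definition LT_Linv :: "nat \<Rightarrow> nat \<Rightarrow> nat \<Rightarrow> ps2pair" where
  "LT_Linv p h1 h2 = (THE M. fst M 0 0 = 0 \<and> snd M 0 0 = 0 \<and> pp_comp (LT_L p h1 h2) M = pp_X)"

text \<open>F(A,B) = L^{-1}(L(A) + L(B)) for pairs A, B of series without constant term,
  i.e. the formal group law F(X,Y) = L^{-1}(L(X)+L(Y)) with X := A, Y := B substituted.\<close>
definition LT_F :: "nat \<Rightarrow> nat \<Rightarrow> nat \<Rightarrow> ps2pair \<Rightarrow> ps2pair \<Rightarrow> ps2pair" where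
  "LT_F p h1 h2 A B = pp_comp (LT_Linv p h1 h2) (pp_add (pp_comp (LT_L p h1 h2) A) (pp_comp (LT_L p h1 h2) B))"

fun LT_mult :: "nat \<Rightarrow> nat \<Rightarrow> nat \<Rightarrow> nat \<Rightarrow> ps2pair" where
  "LT_mult p h1 h2 0 = pp_zero"
| "LT_mult p h1 h2 (Suc 0) = pp_X"
| "LT_mult p h1 h2 (Suc (Suc k)) = LT_F p h1 h2 pp_X (LT_mult p h1 h2 (Suc k))"

definition p_integral :: "nat \<Rightarrow> rat \<Rightarrow> bool" where
  "p_integral p r \<longleftrightarrow> \<not> (int p dvd snd (quotient_of r))"

definition ps_p_integral :: "nat \<Rightarrow> ps2 \<Rightarrow> bool" where
  "ps_p_integral p f \<longleftrightarrow> (\<forall>i j. p_integral p (f i j))"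

definition pp_p_integral :: "nat \<Rightarrow> ps2pair \<Rightarrow> bool" where
  "pp_p_integral p F \<longleftrightarrow> ps_p_integral p (fst F) \<and> ps_p_integral p (snd F)"

definition ps_cong_mod_p :: "nat \<Rightarrow> ps2 \<Rightarrow> ps2 \<Rightarrow> bool" where
  "ps_cong_mod_p p f g \<longleftrightarrow> (\<forall>i j. p_integral p ((f i j - g i j) / of_nat p))"

definition pp_cong_mod_p :: "nat \<Rightarrow> ps2pair \<Rightarrow> ps2pair \<Rightarrow> bool" where
  "pp_cong_mod_p p F G \<longleftrightarrow> ps_cong_mod_p p (fst F) (fst G) \<and> ps_cong_mod_p p (snd F) (snd G)"

definition pp_cong_deg2 :: "ps2pair \<Rightarrow> ps2pair \<Rightarrow> bool" where
  "pp_cong_deg2 F G \<longleftrightarrow> (\<forall>i j. i + j < 2 \<longrightarrow> fst F i j = fst G i j \<and> snd F i j = snd G i j)"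

definition C_LT :: "nat \<Rightarrow> nat \<Rightarrow> nat \<Rightarrow> ps2pair set" where
  "C_LT p h1 h2 = {f. pp_p_integral p f
      \<and> pp_cong_deg2 f (ps_smult (of_nat p) ps_X1, ps_smult (of_nat p) ps_X2)
      \<and> (pp_cong_mod_p p f (ps_pow ps_X1 (p ^ h1), ps_pow ps_X2 (p ^ h2))
         \<or> pp_cong_mod_p p f (ps_pow ps_X2 (p ^ h1), ps_pow ps_X1 (p ^ h2)))}"

end

(* Write the logarithm as L = X + N, where N only involves the monomials x1^(p^t) and x2^(p^t),
   t >= 1, with coefficients c such that p^t c is p-integral.  Telescoping its coefficients
   gives the functional equation p L(X) = p X + L(Phi(X)) with Phi = (x2^(p^h1), x1^(p^h2)).
   Since L([p](X)) = p L(X), the series G = [p](X) satisfies G - Phi = p X + N(Phi) - N(G).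
   As N has no terms of degree below 2, this gives G = p X modulo degree 2.  Modulo p one
   argues by induction on the degree: if G = Phi mod p below degree n, then the congruence
   A^(p^t) = B^(p^t) mod p^(t+1) for A = B mod p cancels the denominator p^t of each
   coefficient of N, so N(G) = N(Phi) mod p through degree n, and hence G = Phi mod p in
   degree n as well. *)

theory Submission
  imports Defs "HOL-Computational_Algebra.Formal_Power_Series"
begin

unbundle fps_syntax

section \<open>Bivariate power series\<close>

text \<open>\<open>F $ i $ j\<close> is the coefficient of \<open>x1 ^ i * x2 ^ j\<close>.\<close>

type_synonym fps2 = "rat fps fps"

definition fps2_of :: "ps2 \<Rightarrow> fps2" where
  "fps2_of f = Abs_fps (\<lambda>i. Abs_fps (\<lambda>j. f i j))"

lemma fps2_of_nth [simp]: "fps2_of f $ i $ j = f i j"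
  by (simp add: fps2_of_def)

lemma fps2_eqI: "(\<And>i j. F $ i $ j = G $ i $ j) \<Longrightarrow> F = (G :: fps2)"
  by (intro fps_ext) auto

lemma fps2_of_coeffs [simp]: "fps2_of (\<lambda>i j. F $ i $ j) = F"
  by (rule fps2_eqI) simp

lemma fps2_of_inject: "fps2_of f = fps2_of g \<longleftrightarrow> f = g"
  by (metis fps2_of_nth ext)

lemma pp_eq_iff:
  "P = Q \<longleftrightarrow> fps2_of (fst P) = fps2_of (fst Q) \<and> fps2_of (snd P) = fps2_of (snd Q)"
  by (simp add: fps2_of_inject prod_eq_iff)

abbreviation X1 :: fps2 where "X1 \<equiv> fps_X"

definition X2 :: fps2 where "X2 = fps_const fps_X"

definition smult2 :: "rat \<Rightarrow> fps2 \<Rightarrow> fps2" where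
  "smult2 c F = fps_const (fps_const c) * F"

lemma smult2_nth [simp]: "smult2 c F $ i $ j = c * F $ i $ j"
  by (simp add: smult2_def)

lemma smult2_add_right: "smult2 c (F + G) = smult2 c F + smult2 c G"
  by (simp add: smult2_def algebra_simps)

lemma smult2_diff_right: "smult2 c (F - G) = smult2 c F - smult2 c G"
  by (simp add: smult2_def algebra_simps)

lemma smult2_add_left: "smult2 c F + smult2 d F = smult2 (c + d) F"
  by (simp add: smult2_def algebra_simps flip: fps_const_add)

lemma smult2_sum: "smult2 c (sum f S) = (\<Sum>s\<in>S. smult2 c (f s))"
  by (simp add: smult2_def sum_distrib_left)

lemma smult2_smult2 [simp]: "smult2 c (smult2 d F) = smult2 (c * d) F"
  by (simp add: smult2_def mult.assoc flip: fps_const_mult)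

lemma smult2_one [simp]: "smult2 1 F = F"
  by (simp add: smult2_def)

lemma smult2_mult_smult2: "smult2 c F * smult2 d G = smult2 (c * d) (F * G)"
  by (simp add: smult2_def algebra_simps flip: fps_const_mult)

lemma fps2_mult_nth:
  "(F * G :: fps2) $ i $ j = (\<Sum>a\<le>i. \<Sum>b\<le>j. F $ a $ b * G $ (i - a) $ (j - b))"
  by (simp add: fps_mult_nth fps_sum_nth atLeast0AtMost sum_distrib_left)

lemma fps2_one_nth: "(1 :: fps2) $ i $ j = (if i = 0 \<and> j = 0 then 1 else 0)"
  by simp

lemma X2_power_nth: "(X2 ^ b) $ i $ j = (if i = 0 \<and> j = b then 1 else 0)"
  by (simp add: fps_const_power X2_def)

lemma X2_nth: "X2 $ i $ j = (if i = 0 \<and> j = 1 then 1 else 0)"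
  using X2_power_nth[of 1] by simp

lemma monomial2_nth: "(X1 ^ a * X2 ^ b) $ i $ j = (if i = a \<and> j = b then 1 else 0)"
  by (simp add: fps_X_power_mult_nth fps_const_power X2_def)

lemma fps2_of_ps_one [simp]: "fps2_of ps_one = 1"
  by (rule fps2_eqI) (simp add: ps_one_def)

lemma fps2_of_ps_add [simp]: "fps2_of (ps_add f g) = fps2_of f + fps2_of g"
  by (rule fps2_eqI) (simp add: ps_add_def)

lemma fps2_of_ps_mult [simp]: "fps2_of (ps_mult f g) = fps2_of f * fps2_of g"
  by (rule fps2_eqI) (simp add: ps_mult_def fps2_mult_nth)

lemma fps2_of_ps_pow [simp]: "fps2_of (ps_pow f n) = fps2_of f ^ n"
  by (induction n) (simp_all add: ps_pow_def)

lemma fps2_of_ps_smult [simp]: "fps2_of (ps_smult c f) = smult2 c (fps2_of f)"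
  by (rule fps2_eqI) (simp add: ps_smult_def)

lemma fps2_of_ps_X1 [simp]: "fps2_of ps_X1 = X1"
  by (rule fps2_eqI) (simp add: ps_X1_def)

lemma fps2_of_ps_X2 [simp]: "fps2_of ps_X2 = X2"
  by (rule fps2_eqI) (simp add: ps_X2_def X2_nth)

lemma sum2_delta:
  fixes v :: "'a::comm_monoid_add"
  assumes "finite S" "finite T" "a \<in> S" "b \<in> T"
  shows "(\<Sum>a'\<in>S. \<Sum>b'\<in>T. if a' = a \<and> b' = b then v else 0) = v"
proof -
  have "(\<Sum>b'\<in>T. if a' = a \<and> b' = b then v else 0) = (if a' = a then v else 0)" for a'
    using assms by (cases "a' = a") simp_all
  then show ?thesis using assms by simp
qed

definition ord_ge :: "nat \<Rightarrow> fps2 \<Rightarrow> bool" where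
  "ord_ge n F \<longleftrightarrow> (\<forall>i j. i + j < n \<longrightarrow> F $ i $ j = 0)"

lemma ord_ge_0 [simp]: "ord_ge 0 F"
  by (simp add: ord_ge_def)

lemma ord_ge_zero [simp]: "ord_ge n 0"
  by (simp add: ord_ge_def)

lemma ord_ge_1_iff: "ord_ge (Suc 0) F \<longleftrightarrow> F $ 0 $ 0 = 0"
  by (auto simp: ord_ge_def)

lemma ord_ge_mono: "ord_ge n F \<Longrightarrow> m \<le> n \<Longrightarrow> ord_ge m F"
  by (auto simp: ord_ge_def)

lemma ord_ge_add: "ord_ge n F \<Longrightarrow> ord_ge n G \<Longrightarrow> ord_ge n (F + G)"
  by (auto simp: ord_ge_def)

lemma ord_ge_diff: "ord_ge n F \<Longrightarrow> ord_ge n G \<Longrightarrow> ord_ge n (F - G)"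
  by (auto simp: ord_ge_def)

lemma ord_ge_diff_commute: "ord_ge n (F - G) \<Longrightarrow> ord_ge n (G - F)"
  by (auto simp: ord_ge_def)

lemma ord_ge_diff_trans: "ord_ge n (F - G) \<Longrightarrow> ord_ge n (G - H) \<Longrightarrow> ord_ge n (F - H)"
  using ord_ge_add[of n "F - G" "G - H"] by simp

lemma ord_ge_smult2: "ord_ge n F \<Longrightarrow> ord_ge n (smult2 c F)"
  by (auto simp: ord_ge_def)

lemma ord_ge_X1_power: "n \<le> e \<Longrightarrow> ord_ge n (X1 ^ e)"
  by (auto simp: ord_ge_def)

lemma ord_ge_X2_power: "n \<le> e \<Longrightarrow> ord_ge n (X2 ^ e)"
  by (auto simp: ord_ge_def X2_power_nth)

lemma ord_ge_X1: "ord_ge 1 X1"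
  by (simp add: ord_ge_def)

lemma ord_ge_X2: "ord_ge 1 X2"
  by (simp add: ord_ge_def X2_nth)

lemma ord_ge_mult:
  assumes "ord_ge m F" "ord_ge n G"
  shows "ord_ge (m + n) (F * G)"
  unfolding ord_ge_def
proof (intro allI impI)
  fix i j assume ij: "i + j < m + n"
  have "F $ a $ b * G $ (i - a) $ (j - b) = 0" if "a \<le> i" "b \<le> j" for a b
  proof (cases "a + b < m")
    case False
    then have "(i - a) + (j - b) < n" using ij that by linarith
    then show ?thesis using assms(2) by (simp add: ord_ge_def)
  qed (use assms(1) in \<open>simp add: ord_ge_def\<close>)
  then show "(F * G) $ i $ j = 0"
    unfolding fps2_mult_nth by (intro sum.neutral ballI) auto
qed

lemma ord_ge_power: "ord_ge 1 F \<Longrightarrow> ord_ge n (F ^ n)"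
  by (induction n) (use ord_ge_mult[of 1 F] in fastforce)+

lemma ord_ge_mult_diff:
  assumes "ord_ge n (F - F')" "ord_ge n (G - G')"
  shows "ord_ge n (F * G - F' * G')"
proof -
  have "F * G - F' * G' = (F - F') * G + F' * (G - G')"
    by (simp add: algebra_simps)
  then show ?thesis
    using ord_ge_mult[OF assms(1) ord_ge_0[of G]] ord_ge_mult[OF ord_ge_0[of F'] assms(2)]
    by (simp add: ord_ge_add)
qed

lemma fps2_eq_if_ord_ge: "(\<And>n. ord_ge n (F - G)) \<Longrightarrow> F = G"
proof (rule fps2_eqI)
  fix i j assume "\<And>n. ord_ge n (F - G)"
  from this[of "Suc (i + j)"] show "F $ i $ j = G $ i $ j"
    by (simp add: ord_ge_def)
qed

lemma ord_ge_power_diff: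
  assumes "ord_ge n (A - B)" "ord_ge 1 A" "ord_ge 1 B" "a \<ge> 1"
  shows "ord_ge (n + a - 1) (A ^ a - B ^ a)"
  using assms(4)
proof (induction a rule: dec_induct)
  case base then show ?case using assms(1) by simp
next
  case (step a)
  have "A ^ Suc a - B ^ Suc a = A * (A ^ a - B ^ a) + (A - B) * B ^ a"
    by (simp add: algebra_simps)
  moreover have "ord_ge (1 + (n + a - 1)) (A * (A ^ a - B ^ a))"
    using step assms by (intro ord_ge_mult)
  moreover have "ord_ge (n + a) ((A - B) * B ^ a)"
    using assms by (intro ord_ge_mult ord_ge_power)
  ultimately show ?case
    using step(1) by (auto intro: ord_ge_add elim: ord_ge_mono)
qed

lemma ord_ge_monomial_diff:
  assumes "ord_ge n (A1 - B1)" "ord_ge n (A2 - B2)"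
    and "ord_ge 1 A1" "ord_ge 1 A2" "ord_ge 1 B1" "ord_ge 1 B2" and "a + b \<ge> 2"
  shows "ord_ge (n + 1) (A1 ^ a * A2 ^ b - B1 ^ a * B2 ^ b)"
proof -
  have "A1 ^ a * A2 ^ b - B1 ^ a * B2 ^ b = A1 ^ a * (A2 ^ b - B2 ^ b) + (A1 ^ a - B1 ^ a) * B2 ^ b"
    by (simp add: algebra_simps)
  moreover have "ord_ge (n + 1) (A1 ^ a * (A2 ^ b - B2 ^ b))"
  proof (cases "b = 0")
    case False
    then have "ord_ge (a + (n + b - 1)) (A1 ^ a * (A2 ^ b - B2 ^ b))"
      using assms by (intro ord_ge_mult ord_ge_power ord_ge_power_diff) auto
    then show ?thesis by (rule ord_ge_mono) (use assms in auto)
  qed simp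
  moreover have "ord_ge (n + 1) ((A1 ^ a - B1 ^ a) * B2 ^ b)"
  proof (cases "a = 0")
    case False
    then have "ord_ge ((n + a - 1) + b) ((A1 ^ a - B1 ^ a) * B2 ^ b)"
      using assms by (intro ord_ge_mult ord_ge_power ord_ge_power_diff) auto
    then show ?thesis by (rule ord_ge_mono) (use assms in auto)
  qed simp
  ultimately show ?thesis by (simp add: ord_ge_add)
qed

lemma pp_cong_deg2_iff:
  "pp_cong_deg2 P Q \<longleftrightarrow>
     ord_ge 2 (fps2_of (fst P) - fps2_of (fst Q)) \<and> ord_ge 2 (fps2_of (snd P) - fps2_of (snd Q))"
  by (auto simp: pp_cong_deg2_def ord_ge_def)

section \<open>Substitution\<close>

text \<open>As in \<^const>\<open>ps_comp\<close>, only monomials of degree at most \<open>i + j\<close> are summed, which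
  is the true substitution as long as the substituted series have no constant term.\<close>

definition subst2 :: "fps2 \<Rightarrow> fps2 \<Rightarrow> fps2 \<Rightarrow> fps2" where
  "subst2 F A B = Abs_fps (\<lambda>i. Abs_fps (\<lambda>j.
     \<Sum>a\<le>i+j. \<Sum>b\<le>i+j. F $ a $ b * (A ^ a * B ^ b) $ i $ j))"

lemma subst2_nth:
  "subst2 F A B $ i $ j = (\<Sum>a\<le>i+j. \<Sum>b\<le>i+j. F $ a $ b * (A ^ a * B ^ b) $ i $ j)"
  by (simp add: subst2_def)

lemma fps2_of_ps_comp [simp]:
  "fps2_of (ps_comp f g1 g2) = subst2 (fps2_of f) (fps2_of g1) (fps2_of g2)"
proof (rule fps2_eqI)
  have "ps_mult (ps_pow g1 a) (ps_pow g2 b) i j = (fps2_of g1 ^ a * fps2_of g2 ^ b) $ i $ j"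
    for a b i j
    by (metis fps2_of_nth fps2_of_ps_mult fps2_of_ps_pow)
  then show "fps2_of (ps_comp f g1 g2) $ i $ j = subst2 (fps2_of f) (fps2_of g1) (fps2_of g2) $ i $ j"
    for i j
    by (simp add: ps_comp_def subst2_nth)
qed

lemma ord_ge_monomial: "ord_ge 1 A \<Longrightarrow> ord_ge 1 B \<Longrightarrow> ord_ge (a + b) (A ^ a * B ^ b)"
  by (intro ord_ge_mult ord_ge_power)

lemma subst2_nth_bound:
  assumes "ord_ge 1 A" "ord_ge 1 B" "i + j \<le> N"
  shows "subst2 F A B $ i $ j = (\<Sum>a\<le>N. \<Sum>b\<le>N. F $ a $ b * (A ^ a * B ^ b) $ i $ j)"
proof -
  have zero: "F $ a $ b * (A ^ a * B ^ b) $ i $ j = 0" if "i + j < a + b" for a b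
    using ord_ge_monomial[OF assms(1,2), of a b] that by (simp add: ord_ge_def)
  have "(\<Sum>a\<le>N. \<Sum>b\<le>N. F $ a $ b * (A ^ a * B ^ b) $ i $ j)
      = (\<Sum>a\<le>i+j. \<Sum>b\<le>N. F $ a $ b * (A ^ a * B ^ b) $ i $ j)"
    using assms(3) zero by (intro sum.mono_neutral_right) (auto intro!: sum.neutral)
  also have "\<dots> = subst2 F A B $ i $ j"
    unfolding subst2_nth using assms(3) zero
    by (intro sum.cong refl sum.mono_neutral_right) auto
  finally show ?thesis ..
qed

lemma subst2_add: "subst2 (F + G) A B = subst2 F A B + subst2 G A B"
  by (rule fps2_eqI) (simp add: subst2_nth algebra_simps sum.distrib)

lemma subst2_diff: "subst2 (F - G) A B = subst2 F A B - subst2 G A B"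
  by (rule fps2_eqI) (simp add: subst2_nth algebra_simps sum_subtractf)

lemma subst2_zero [simp]: "subst2 0 A B = 0"
  by (rule fps2_eqI) (simp add: subst2_nth)

lemma subst2_smult2: "subst2 (smult2 c F) A B = smult2 c (subst2 F A B)"
  by (rule fps2_eqI) (simp add: subst2_nth sum_distrib_left mult.assoc)

lemma subst2_sum: "subst2 (sum f S) A B = (\<Sum>s\<in>S. subst2 (f s) A B)"
  by (induction S rule: infinite_finite_induct) (auto simp: subst2_add)

lemma subst2_const_coeff: "subst2 F A B $ 0 $ 0 = F $ 0 $ 0"
  by (simp add: subst2_nth)

lemma ord_ge_subst2:
  assumes "ord_ge 1 A" "ord_ge 1 B" "ord_ge n F"
  shows "ord_ge n (subst2 F A B)"
  unfolding ord_ge_def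
proof (intro allI impI)
  fix i j assume ij: "i + j < n"
  have "F $ a $ b * (A ^ a * B ^ b) $ i $ j = 0" for a b
    using assms ij ord_ge_monomial[OF assms(1,2), of a b] unfolding ord_ge_def
    by (cases "a + b \<le> i + j") auto
  then show "subst2 F A B $ i $ j = 0"
    unfolding subst2_nth by (intro sum.neutral ballI)
qed

lemma subst2_monomial:
  assumes "ord_ge 1 A" "ord_ge 1 B"
  shows "subst2 (X1 ^ a * X2 ^ b) A B = A ^ a * B ^ b"
proof (rule fps2_eqI)
  fix i j
  define N where "N = max (i + j) (max a b)"
  have "subst2 (X1 ^ a * X2 ^ b) A B $ i $ j
      = (\<Sum>a'\<le>N. \<Sum>b'\<le>N. (X1 ^ a * X2 ^ b) $ a' $ b' * (A ^ a' * B ^ b') $ i $ j)"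
    using assms by (intro subst2_nth_bound) (auto simp: N_def)
  also have "\<dots> = (\<Sum>a'\<le>N. \<Sum>b'\<le>N.
      if a' = a \<and> b' = b then (A ^ a * B ^ b) $ i $ j else 0)"
    by (intro sum.cong refl) (auto simp: monomial2_nth)
  also have "\<dots> = (A ^ a * B ^ b) $ i $ j"
    by (rule sum2_delta) (auto simp: N_def)
  finally show "subst2 (X1 ^ a * X2 ^ b) A B $ i $ j = (A ^ a * B ^ b) $ i $ j" .
qed

lemma subst2_X1_power: "ord_ge 1 A \<Longrightarrow> ord_ge 1 B \<Longrightarrow> subst2 (X1 ^ a) A B = A ^ a"
  using subst2_monomial[of A B a 0] by simp

lemma subst2_X2_power: "ord_ge 1 A \<Longrightarrow> ord_ge 1 B \<Longrightarrow> subst2 (X2 ^ b) A B = B ^ b"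
  using subst2_monomial[of A B 0 b] by simp

lemma subst2_X1: "ord_ge 1 A \<Longrightarrow> ord_ge 1 B \<Longrightarrow> subst2 X1 A B = A"
  using subst2_X1_power[of A B 1] by simp

lemma subst2_X2: "ord_ge 1 A \<Longrightarrow> ord_ge 1 B \<Longrightarrow> subst2 X2 A B = B"
  using subst2_X2_power[of A B 1] by simp

lemma subst2_one: "ord_ge 1 A \<Longrightarrow> ord_ge 1 B \<Longrightarrow> subst2 1 A B = 1"
  using subst2_monomial[of A B 0 0] by simp

lemma subst2_X1_X2 [simp]: "subst2 F X1 X2 = F"
proof (rule fps2_eqI)
  fix i j
  have "subst2 F X1 X2 $ i $ j = (\<Sum>a\<le>i+j. \<Sum>b\<le>i+j. if a = i \<and> b = j then F $ i $ j else 0)"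
    unfolding subst2_nth by (intro sum.cong refl) (auto simp: monomial2_nth)
  also have "\<dots> = F $ i $ j"
    by (rule sum2_delta) auto
  finally show "subst2 F X1 X2 $ i $ j = F $ i $ j" .
qed

lemma subst2_cong_ord_ge:
  assumes "ord_ge 1 A" "ord_ge 1 B" "ord_ge n (F - G)"
  shows "ord_ge n (subst2 F A B - subst2 G A B)"
  using ord_ge_subst2[OF assms] by (simp add: subst2_diff)

lemma ord_ge_subst2_diff:
  assumes "ord_ge n (A - A')" "ord_ge n (B - B')"
    and "ord_ge 1 A" "ord_ge 1 B" "ord_ge 1 A'" "ord_ge 1 B'" and "ord_ge 2 F"
  shows "ord_ge (n + 1) (subst2 F A B - subst2 F A' B')"
  unfolding ord_ge_def
proof (intro allI impI)
  fix i j assume ij: "i + j < n + 1"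
  have zero: "F $ a $ b * ((A ^ a * B ^ b) $ i $ j - (A' ^ a * B' ^ b) $ i $ j) = 0" for a b
  proof (cases "a + b \<ge> 2")
    case True
    then have "ord_ge (n + 1) (A ^ a * B ^ b - A' ^ a * B' ^ b)"
      using assms by (intro ord_ge_monomial_diff)
    then show ?thesis using ij by (simp add: ord_ge_def)
  qed (use assms(7) in \<open>simp add: ord_ge_def\<close>)
  have "(subst2 F A B - subst2 F A' B') $ i $ j
      = (\<Sum>a\<le>i+j. \<Sum>b\<le>i+j. F $ a $ b * ((A ^ a * B ^ b) $ i $ j - (A' ^ a * B' ^ b) $ i $ j))"
    by (simp add: subst2_nth sum_subtractf right_diff_distrib)
  then show "(subst2 F A B - subst2 F A' B') $ i $ j = 0"
    by (simp add: zero)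
qed

definition trunc2 :: "nat \<Rightarrow> fps2 \<Rightarrow> fps2" where
  "trunc2 n F = Abs_fps (\<lambda>i. Abs_fps (\<lambda>j. if i + j < n then F $ i $ j else 0))"

lemma trunc2_nth: "trunc2 n F $ i $ j = (if i + j < n then F $ i $ j else 0)"
  by (simp add: trunc2_def)

lemma ord_ge_diff_trunc2: "ord_ge n (F - trunc2 n F)"
  by (simp add: ord_ge_def trunc2_nth)

lemma ord_ge_trunc2: "ord_ge m F \<Longrightarrow> ord_ge m (trunc2 n F)"
  by (simp add: ord_ge_def trunc2_nth)

definition poly2 :: "nat \<Rightarrow> (nat \<Rightarrow> nat \<Rightarrow> rat) \<Rightarrow> fps2" where
  "poly2 n c = (\<Sum>a<n. \<Sum>b<n. smult2 (c a b) (X1 ^ a * X2 ^ b))"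

lemma trunc2_eq_poly2: "trunc2 n F = poly2 n (\<lambda>a b. trunc2 n F $ a $ b)"
proof (rule fps2_eqI)
  fix i j
  have "poly2 n (\<lambda>a b. trunc2 n F $ a $ b) $ i $ j
      = (\<Sum>a<n. \<Sum>b<n. if a = i \<and> b = j then trunc2 n F $ i $ j else 0)"
    unfolding poly2_def fps_sum_nth smult2_nth monomial2_nth by (intro sum.cong refl) auto
  also have "\<dots> = trunc2 n F $ i $ j"
    by (cases "i < n \<and> j < n") (auto simp: sum2_delta trunc2_nth intro!: sum.neutral)
  finally show "trunc2 n F $ i $ j = poly2 n (\<lambda>a b. trunc2 n F $ a $ b) $ i $ j" ..
qed

lemma subst2_poly2:
  assumes "ord_ge 1 A" "ord_ge 1 B"
  shows "subst2 (poly2 n c) A B = (\<Sum>a<n. \<Sum>b<n. smult2 (c a b) (A ^ a * B ^ b))"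
  by (simp add: poly2_def subst2_sum subst2_smult2 subst2_monomial[OF assms])

lemma subst2_mult_poly2:
  assumes "ord_ge 1 A" "ord_ge 1 B"
  shows "subst2 (poly2 n c * poly2 n d) A B = subst2 (poly2 n c) A B * subst2 (poly2 n d) A B"
proof -
  have "poly2 n c * poly2 n d = (\<Sum>a<n. \<Sum>a'<n. \<Sum>b<n. \<Sum>b'<n.
      smult2 (c a b * d a' b') (X1 ^ (a + a') * X2 ^ (b + b')))"
    unfolding poly2_def sum_product smult2_mult_smult2 by (simp add: power_add algebra_simps)
  then have "subst2 (poly2 n c * poly2 n d) A B = (\<Sum>a<n. \<Sum>a'<n. \<Sum>b<n. \<Sum>b'<n.
      smult2 (c a b * d a' b') (A ^ (a + a') * B ^ (b + b')))"
    by (simp add: subst2_sum subst2_smult2 subst2_monomial[OF assms])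
  also have "\<dots> = subst2 (poly2 n c) A B * subst2 (poly2 n d) A B"
    unfolding subst2_poly2[OF assms] sum_product smult2_mult_smult2
    by (simp add: power_add algebra_simps)
  finally show ?thesis .
qed

lemma subst2_mult:
  assumes A: "ord_ge 1 A" "ord_ge 1 B"
  shows "subst2 (F * G) A B = subst2 F A B * subst2 G A B"
proof (rule fps2_eq_if_ord_ge)
  fix n
  have "ord_ge n (F * G - trunc2 n F * trunc2 n G)"
    by (intro ord_ge_mult_diff ord_ge_diff_trunc2)
  then have "ord_ge n (subst2 (F * G) A B - subst2 (trunc2 n F * trunc2 n G) A B)"
    using subst2_cong_ord_ge[OF A] by blast
  moreover have "ord_ge n (subst2 (trunc2 n F) A B * subst2 (trunc2 n G) A B
      - subst2 F A B * subst2 G A B)"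
    by (intro ord_ge_mult_diff; rule ord_ge_diff_commute, rule subst2_cong_ord_ge[OF A],
        rule ord_ge_diff_trunc2)
  moreover have "subst2 (trunc2 n F * trunc2 n G) A B
      = subst2 (trunc2 n F) A B * subst2 (trunc2 n G) A B"
    using subst2_mult_poly2[OF A, of n "\<lambda>a b. trunc2 n F $ a $ b" "\<lambda>a b. trunc2 n G $ a $ b"]
    by (simp only: trunc2_eq_poly2[symmetric])
  ultimately show "ord_ge n (subst2 (F * G) A B - subst2 F A B * subst2 G A B)"
    by (simp add: ord_ge_diff_trans)
qed

lemma subst2_power:
  assumes "ord_ge 1 A" "ord_ge 1 B"
  shows "subst2 (F ^ k) A B = subst2 F A B ^ k"
  by (induction k) (simp_all add: subst2_one[OF assms] subst2_mult[OF assms])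

lemma subst2_subst2:
  assumes M: "ord_ge 1 M1" "ord_ge 1 M2" and A: "ord_ge 1 A" "ord_ge 1 B"
  shows "subst2 (subst2 F M1 M2) A B = subst2 F (subst2 M1 A B) (subst2 M2 A B)"
proof (rule fps2_eq_if_ord_ge)
  fix n
  have MA: "ord_ge 1 (subst2 M1 A B)" "ord_ge 1 (subst2 M2 A B)"
    using M by (simp_all add: ord_ge_1_iff subst2_const_coeff)
  define c where "c a b = trunc2 n F $ a $ b" for a b
  have "subst2 (subst2 (poly2 n c) M1 M2) A B
      = (\<Sum>a<n. \<Sum>b<n. smult2 (c a b) (subst2 M1 A B ^ a * subst2 M2 A B ^ b))"
    by (simp add: subst2_poly2[OF M] subst2_sum subst2_smult2 subst2_mult[OF A] subst2_power[OF A])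
  also have "\<dots> = subst2 (poly2 n c) (subst2 M1 A B) (subst2 M2 A B)"
    by (simp add: subst2_poly2[OF MA])
  finally have trunc: "subst2 (subst2 (trunc2 n F) M1 M2) A B
      = subst2 (trunc2 n F) (subst2 M1 A B) (subst2 M2 A B)"
    unfolding c_def by (simp only: trunc2_eq_poly2[symmetric])
  have "ord_ge n (subst2 (subst2 F M1 M2) A B - subst2 (subst2 (trunc2 n F) M1 M2) A B)"
    by (intro subst2_cong_ord_ge[OF A] subst2_cong_ord_ge[OF M] ord_ge_diff_trunc2)
  moreover have "ord_ge n (subst2 (trunc2 n F) (subst2 M1 A B) (subst2 M2 A B)
      - subst2 F (subst2 M1 A B) (subst2 M2 A B))"
    by (rule ord_ge_diff_commute, rule subst2_cong_ord_ge[OF MA], rule ord_ge_diff_trunc2)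
  ultimately show "ord_ge n (subst2 (subst2 F M1 M2) A B - subst2 F (subst2 M1 A B) (subst2 M2 A B))"
    unfolding trunc by (rule ord_ge_diff_trans)
qed

definition swap2 :: "fps2 \<Rightarrow> fps2" where
  "swap2 F = Abs_fps (\<lambda>i. Abs_fps (\<lambda>j. F $ j $ i))"

lemma swap2_nth [simp]: "swap2 F $ i $ j = F $ j $ i"
  by (simp add: swap2_def)

lemma swap2_add: "swap2 (F + G) = swap2 F + swap2 G"
  by (rule fps2_eqI) simp

lemma swap2_diff: "swap2 (F - G) = swap2 F - swap2 G"
  by (rule fps2_eqI) simp

lemma swap2_smult2: "swap2 (smult2 c F) = smult2 c (swap2 F)"
  by (rule fps2_eqI) simp

lemma swap2_mult: "swap2 (F * G) = swap2 F * swap2 G"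
  by (rule fps2_eqI) (unfold swap2_nth fps2_mult_nth, rule sum.swap)

lemma swap2_one: "swap2 1 = 1"
  by (rule fps2_eqI) (simp add: fps2_one_nth)

lemma swap2_power: "swap2 (F ^ n) = swap2 F ^ n"
  by (induction n) (simp_all add: swap2_one swap2_mult)

lemma swap2_X1: "swap2 X1 = X2"
  by (rule fps2_eqI) (simp add: X2_nth)

lemma swap2_X2: "swap2 X2 = X1"
  by (rule fps2_eqI) (simp add: X2_nth)

lemma swap2_subst2: "swap2 (subst2 F A B) = subst2 F (swap2 A) (swap2 B)"
proof (rule fps2_eqI)
  fix i j
  have "swap2 A ^ a * swap2 B ^ b = swap2 (A ^ a * B ^ b)" for a b
    by (simp add: swap2_mult swap2_power)
  then show "swap2 (subst2 F A B) $ i $ j = subst2 F (swap2 A) (swap2 B) $ i $ j"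
    by (simp add: subst2_nth add.commute)
qed

lemma subst2_swap2: "subst2 (swap2 F) B A = subst2 F A B"
proof (rule fps2_eqI)
  fix i j
  show "subst2 (swap2 F) B A $ i $ j = subst2 F A B $ i $ j"
    unfolding subst2_nth swap2_nth by (subst sum.swap) (simp add: mult.commute)
qed

section \<open>Inversion\<close>

context
  fixes N1 N2 :: fps2
  assumes ord_N: "ord_ge 2 N1" "ord_ge 2 N2"
begin

primrec inverse_approx :: "nat \<Rightarrow> fps2 \<times> fps2" where
  "inverse_approx 0 = (0, 0)"
| "inverse_approx (Suc k) =
     (X1 - subst2 N1 (fst (inverse_approx k)) (snd (inverse_approx k)),
      X2 - subst2 N2 (fst (inverse_approx k)) (snd (inverse_approx k)))"

lemma ord_ge_inverse_approx: "ord_ge 1 (fst (inverse_approx k)) \<and> ord_ge 1 (snd (inverse_approx k))"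
  using ord_N by (cases k) (simp_all add: ord_ge_1_iff subst2_const_coeff X2_nth ord_ge_def)

lemma inverse_approx_step:
  "ord_ge k (fst (inverse_approx k) - fst (inverse_approx (Suc k)))
   \<and> ord_ge k (snd (inverse_approx k) - snd (inverse_approx (Suc k)))"
proof (induction k)
  case (Suc k)
  let ?A = "inverse_approx (Suc k)" and ?B = "inverse_approx k"
  have d: "ord_ge k (fst ?A - fst ?B)" "ord_ge k (snd ?A - snd ?B)"
    using Suc ord_ge_diff_commute by blast+
  have l: "ord_ge 1 (fst ?A)" "ord_ge 1 (snd ?A)" "ord_ge 1 (fst ?B)" "ord_ge 1 (snd ?B)"
    using ord_ge_inverse_approx by blast+
  have "ord_ge (k + 1) (subst2 N1 (fst ?A) (snd ?A) - subst2 N1 (fst ?B) (snd ?B))"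
    "ord_ge (k + 1) (subst2 N2 (fst ?A) (snd ?A) - subst2 N2 (fst ?B) (snd ?B))"
    by (rule ord_ge_subst2_diff[OF d l ord_N(1)], rule ord_ge_subst2_diff[OF d l ord_N(2)])
  then show ?case by simp
qed simp

lemma inverse_approx_cauchy:
  "k \<le> m \<Longrightarrow> ord_ge k (fst (inverse_approx k) - fst (inverse_approx m))
    \<and> ord_ge k (snd (inverse_approx k) - snd (inverse_approx m))"
proof (induction m rule: dec_induct)
  case (step m)
  have "ord_ge k (fst (inverse_approx m) - fst (inverse_approx (Suc m)))"
    "ord_ge k (snd (inverse_approx m) - snd (inverse_approx (Suc m)))"
    using inverse_approx_step[of m] \<open>k \<le> m\<close> ord_ge_mono by blast+
  then show ?case
    using step.IH ord_ge_diff_trans by blast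
qed simp

lemma subst2_inverse_exists:
  "\<exists>M1 M2. ord_ge 1 M1 \<and> ord_ge 1 M2
     \<and> M1 + subst2 N1 M1 M2 = X1 \<and> M2 + subst2 N2 M1 M2 = X2"
proof -
  \<comment> \<open>the coefficients of degree \<open>d\<close> of the iterates are constant from step \<open>d + 1\<close> on\<close>
  define M1 where "M1 = Abs_fps (\<lambda>i. Abs_fps (\<lambda>j. fst (inverse_approx (i + j + 1)) $ i $ j))"
  define M2 where "M2 = Abs_fps (\<lambda>i. Abs_fps (\<lambda>j. snd (inverse_approx (i + j + 1)) $ i $ j))"
  have approx: "ord_ge k (M1 - fst (inverse_approx k)) \<and> ord_ge k (M2 - snd (inverse_approx k))"
    for k
    using inverse_approx_cauchy[of "_ + _ + 1" k] by (auto simp: ord_ge_def M1_def M2_def)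
  have M: "ord_ge 1 M1" "ord_ge 1 M2"
    using ord_ge_inverse_approx[of 1] by (auto simp: ord_ge_def M1_def M2_def)
  have "ord_ge k (M1 + subst2 N1 M1 M2 - X1) \<and> ord_ge k (M2 + subst2 N2 M1 M2 - X2)" for k
  proof -
    let ?B = "inverse_approx k"
    have d: "ord_ge k (M1 - fst ?B)" "ord_ge k (M2 - snd ?B)"
      using approx by blast+
    have l: "ord_ge 1 (fst ?B)" "ord_ge 1 (snd ?B)"
      using ord_ge_inverse_approx by blast+
    have "ord_ge (k + 1) (subst2 N1 M1 M2 - subst2 N1 (fst ?B) (snd ?B))"
      "ord_ge (k + 1) (subst2 N2 M1 M2 - subst2 N2 (fst ?B) (snd ?B))"
      by (rule ord_ge_subst2_diff[OF d M l ord_N(1)], rule ord_ge_subst2_diff[OF d M l ord_N(2)])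
    moreover have "ord_ge (k + 1) (M1 - fst (inverse_approx (Suc k)))"
      "ord_ge (k + 1) (M2 - snd (inverse_approx (Suc k)))"
      using approx[of "Suc k"] by auto
    moreover have "M1 + subst2 N1 M1 M2 - X1
        = (M1 - fst (inverse_approx (Suc k))) + (subst2 N1 M1 M2 - subst2 N1 (fst ?B) (snd ?B))"
      "M2 + subst2 N2 M1 M2 - X2
        = (M2 - snd (inverse_approx (Suc k))) + (subst2 N2 M1 M2 - subst2 N2 (fst ?B) (snd ?B))"
      by simp_all
    ultimately have "ord_ge (k + 1) (M1 + subst2 N1 M1 M2 - X1)"
      "ord_ge (k + 1) (M2 + subst2 N2 M1 M2 - X2)"
      by (metis ord_ge_add)+
    then show ?thesis
      using ord_ge_mono le_add1 by blast
  qed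
  then show ?thesis
    using M by (intro exI[of _ M1] exI[of _ M2]) (auto intro: fps2_eq_if_ord_ge)
qed

lemma subst2_inverse_unique:
  assumes "ord_ge 1 A1" "ord_ge 1 A2" "ord_ge 1 B1" "ord_ge 1 B2"
    and "A1 + subst2 N1 A1 A2 = B1 + subst2 N1 B1 B2"
    and "A2 + subst2 N2 A1 A2 = B2 + subst2 N2 B1 B2"
  shows "A1 = B1 \<and> A2 = B2"
proof -
  have "ord_ge k (B1 - A1) \<and> ord_ge k (B2 - A2)" for k
  proof (induction k)
    case (Suc k)
    then have "ord_ge k (A1 - B1)" "ord_ge k (A2 - B2)"
      using ord_ge_diff_commute by blast+
    then have "ord_ge (k + 1) (subst2 N1 A1 A2 - subst2 N1 B1 B2)"
      "ord_ge (k + 1) (subst2 N2 A1 A2 - subst2 N2 B1 B2)"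
      using ord_ge_subst2_diff assms(1-4) ord_N by blast+
    moreover have "B1 - A1 = subst2 N1 A1 A2 - subst2 N1 B1 B2"
      "B2 - A2 = subst2 N2 A1 A2 - subst2 N2 B1 B2"
      using assms(5,6) by (simp_all add: algebra_simps)
    ultimately show ?case by simp
  qed simp
  then show ?thesis
    by (metis fps2_eq_if_ord_ge ord_ge_diff_commute)
qed

end

lemma p_integral_iff:
  assumes "prime p"
  shows "p_integral p r \<longleftrightarrow> (\<exists>a b. b \<noteq> 0 \<and> \<not> int p dvd b \<and> r = of_int a / of_int b)"
proof
  assume "p_integral p r"
  obtain a b where q: "quotient_of r = (a, b)" by (cases "quotient_of r")
  then have "r = of_int a / of_int b" "b > 0"
    by (auto intro: quotient_of_div quotient_of_denom_pos)
  moreover have "\<not> int p dvd b"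
    using \<open>p_integral p r\<close> q by (simp add: p_integral_def)
  ultimately show "\<exists>a b. b \<noteq> 0 \<and> \<not> int p dvd b \<and> r = of_int a / of_int b"
    by (intro exI[of _ a] exI[of _ b]) auto
next
  assume "\<exists>a b. b \<noteq> 0 \<and> \<not> int p dvd b \<and> r = of_int a / of_int b"
  then obtain a b where ab: "b \<noteq> 0" "\<not> int p dvd b" "r = of_int a / of_int b"
    by blast
  obtain a' b' where q: "quotient_of r = (a', b')" by (cases "quotient_of r")
  then have r': "r = of_int a' / of_int b'" "b' > 0" "coprime a' b'"
    by (auto intro: quotient_of_div quotient_of_denom_pos quotient_of_coprime)
  then have "of_int (a * b') = (of_int (a' * b) :: rat)"
    using ab by (simp add: field_simps)
  then have "b' dvd a' * b"
    by (metis dvd_triv_right of_int_eq_iff)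
  then have "b' dvd b"
    using r'(3) by (metis coprime_commute coprime_dvd_mult_right_iff)
  then show "p_integral p r"
    using ab(2) q dvd_trans by (auto simp: p_integral_def)
qed

locale p_integrality =
  fixes p :: nat
  assumes prime_p: "prime p"
begin

abbreviation pint :: "rat \<Rightarrow> bool" where "pint \<equiv> p_integral p"

lemma p_gt_1: "p > 1"
  using prime_p prime_gt_1_nat by blast

lemma p_nonzero: "(of_nat p :: rat) \<noteq> 0"
  using p_gt_1 by simp

lemma pint_of_int [simp]: "pint (of_int a)"
  unfolding p_integral_iff[OF prime_p] using p_gt_1
  by (intro exI[of _ a] exI[of _ 1]) auto

lemma pint_of_nat [simp]: "pint (of_nat a)"
  using pint_of_int[of "int a"] by simp

lemma pint_0 [simp]: "pint 0"
  using pint_of_int[of 0] by simp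

lemma pint_1 [simp]: "pint 1"
  using pint_of_int[of 1] by simp

lemma pint_mult: "pint x \<Longrightarrow> pint y \<Longrightarrow> pint (x * y)"
  and pint_add: "pint x \<Longrightarrow> pint y \<Longrightarrow> pint (x + y)"
proof -
  assume "pint x" "pint y"
  then obtain a b c d where "b \<noteq> 0" "\<not> int p dvd b" "x = of_int a / of_int b"
    "d \<noteq> 0" "\<not> int p dvd d" "y = of_int c / of_int d"
    unfolding p_integral_iff[OF prime_p] by blast
  moreover from calculation have "\<not> int p dvd b * d"
    using prime_p by (simp add: prime_dvd_mult_iff)
  ultimately show "pint (x * y)" "pint (x + y)"
    unfolding p_integral_iff[OF prime_p]
    by (intro exI[of _ "a * c"] exI[of _ "b * d"], simp,
        intro exI[of _ "a * d + c * b"] exI[of _ "b * d"], simp add: field_simps)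
qed

lemma pint_diff: "pint x \<Longrightarrow> pint y \<Longrightarrow> pint (x - y)"
  using pint_add[of x "- y"] pint_mult[OF pint_of_int[of "- 1"], of y] by simp

definition pval_ge :: "nat \<Rightarrow> rat \<Rightarrow> bool" where
  "pval_ge t x \<longleftrightarrow> pint (x / of_nat p ^ t)"

lemma pval_ge_0_iff: "pval_ge 0 x \<longleftrightarrow> pint x"
  by (simp add: pval_ge_def)

lemma pval_ge_zero [simp]: "pval_ge t 0"
  by (simp add: pval_ge_def)

lemma pval_ge_add: "pval_ge t x \<Longrightarrow> pval_ge t y \<Longrightarrow> pval_ge t (x + y)"
  unfolding pval_ge_def by (simp add: add_divide_distrib pint_add)

lemma pval_ge_diff: "pval_ge t x \<Longrightarrow> pval_ge t y \<Longrightarrow> pval_ge t (x - y)"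
  unfolding pval_ge_def by (simp add: diff_divide_distrib pint_diff)

lemma pval_ge_sum: "(\<And>s. s \<in> S \<Longrightarrow> pval_ge t (f s)) \<Longrightarrow> pval_ge t (sum f S)"
  by (induction S rule: infinite_finite_induct) (auto intro: pval_ge_add)

lemma pval_ge_mult:
  assumes "pval_ge s x" "pval_ge t y"
  shows "pval_ge (s + t) (x * y)"
proof -
  have "x * y / of_nat p ^ (s + t) = (x / of_nat p ^ s) * (y / of_nat p ^ t)"
    by (simp add: power_add)
  then show ?thesis
    using assms unfolding pval_ge_def by (simp only:) (rule pint_mult)
qed

lemma pval_ge_mono:
  assumes "pval_ge t x" "s \<le> t"
  shows "pval_ge s x"
proof -
  have "x / of_nat p ^ s = (x / of_nat p ^ t) * of_nat (p ^ (t - s))"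
    using assms(2) p_nonzero by (simp add: field_simps flip: power_add)
  then show ?thesis
    unfolding pval_ge_def by (simp only:) (rule pint_mult[OF assms(1)[unfolded pval_ge_def] pint_of_nat])
qed

lemma pval_ge_of_nat:
  assumes "p dvd n"
  shows "pval_ge 1 (of_nat n)"
proof -
  obtain m where "n = p * m"
    using assms by blast
  then have "of_nat n / of_nat p ^ 1 = (of_nat m :: rat)"
    using p_nonzero by simp
  then show ?thesis
    unfolding pval_ge_def by simp
qed

definition fps2_pval_ge :: "nat \<Rightarrow> fps2 \<Rightarrow> bool" where
  "fps2_pval_ge t F \<longleftrightarrow> (\<forall>i j. pval_ge t (F $ i $ j))"

lemma fps2_pval_ge_zero [simp]: "fps2_pval_ge t 0"
  by (simp add: fps2_pval_ge_def)

lemma fps2_pval_ge_add: "fps2_pval_ge t F \<Longrightarrow> fps2_pval_ge t G \<Longrightarrow> fps2_pval_ge t (F + G)"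
  by (simp add: fps2_pval_ge_def pval_ge_add)

lemma fps2_pval_ge_diff: "fps2_pval_ge t F \<Longrightarrow> fps2_pval_ge t G \<Longrightarrow> fps2_pval_ge t (F - G)"
  by (simp add: fps2_pval_ge_def pval_ge_diff)

lemma fps2_pval_ge_diff_commute: "fps2_pval_ge t (F - G) \<Longrightarrow> fps2_pval_ge t (G - F)"
  using fps2_pval_ge_diff[of t 0 "F - G"] by (simp add: fps2_pval_ge_def)

lemma fps2_pval_ge_mono: "fps2_pval_ge t F \<Longrightarrow> s \<le> t \<Longrightarrow> fps2_pval_ge s F"
  by (meson fps2_pval_ge_def pval_ge_mono)

lemma fps2_pval_ge_sum: "(\<And>s. s \<in> S \<Longrightarrow> fps2_pval_ge t (f s)) \<Longrightarrow> fps2_pval_ge t (sum f S)"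
  by (induction S rule: infinite_finite_induct) (auto intro: fps2_pval_ge_add)

lemma fps2_pval_ge_mult:
  "fps2_pval_ge s F \<Longrightarrow> fps2_pval_ge t G \<Longrightarrow> fps2_pval_ge (s + t) (F * G)"
  unfolding fps2_pval_ge_def fps2_mult_nth by (intro allI pval_ge_sum pval_ge_mult) auto

lemma fps2_pval_ge_power: "fps2_pval_ge t F \<Longrightarrow> fps2_pval_ge (t * k) (F ^ k)"
proof (induction k)
  case 0
  then show ?case by (simp add: fps2_pval_ge_def pval_ge_0_iff)
next
  case (Suc k)
  then show ?case
    using fps2_pval_ge_mult[of t F "t * k" "F ^ k"] by (simp add: add.commute)
qed

lemma fps2_pval_ge_of_nat:
  assumes "p dvd n"
  shows "fps2_pval_ge 1 (of_nat n)"
proof -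
  have "(of_nat n :: fps2) $ i $ j = (if i = 0 \<and> j = 0 then of_nat n else 0)" for i j
    by simp
  then show ?thesis
    using pval_ge_of_nat[OF assms] by (simp add: fps2_pval_ge_def)
qed

lemma fps2_pval_ge_smult2_p: "fps2_pval_ge 0 F \<Longrightarrow> fps2_pval_ge 1 (smult2 (of_nat p) F)"
  using p_nonzero by (simp add: fps2_pval_ge_def pval_ge_def)

lemma fps2_pval_ge_X1_power: "fps2_pval_ge 0 (X1 ^ a)"
  and fps2_pval_ge_X2_power: "fps2_pval_ge 0 (X2 ^ a)"
  and fps2_pval_ge_X1: "fps2_pval_ge 0 X1"
  and fps2_pval_ge_X2: "fps2_pval_ge 0 X2"
  by (simp_all add: fps2_pval_ge_def pval_ge_0_iff X2_power_nth X2_nth)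

lemma pp_p_integral_iff:
  "pp_p_integral p P \<longleftrightarrow> fps2_pval_ge 0 (fps2_of (fst P)) \<and> fps2_pval_ge 0 (fps2_of (snd P))"
  by (simp add: pp_p_integral_def ps_p_integral_def fps2_pval_ge_def pval_ge_0_iff)

lemma pp_cong_mod_p_iff:
  "pp_cong_mod_p p P Q \<longleftrightarrow> fps2_pval_ge 1 (fps2_of (fst P) - fps2_of (fst Q))
     \<and> fps2_pval_ge 1 (fps2_of (snd P) - fps2_of (snd Q))"
  by (simp add: pp_cong_mod_p_def ps_cong_mod_p_def fps2_pval_ge_def pval_ge_def)

section \<open>Frobenius congruences\<close>

lemma power_p_diff_pval_ge:
  assumes B: "fps2_pval_ge 0 B" and D: "fps2_pval_ge r D" and r: "r \<ge> 1"
  shows "fps2_pval_ge (r + 1) ((B + D) ^ p - B ^ p)"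
proof -
  have "(B + D) ^ p = (\<Sum>k\<le>p. of_nat (p choose k) * D ^ k * B ^ (p - k))"
    by (subst add.commute) (rule binomial_ring)
  also have "\<dots> = (\<Sum>k\<in>{1..p}. of_nat (p choose k) * D ^ k * B ^ (p - k)) + B ^ p"
    by (simp add: atMost_atLeast0 sum.atLeast_Suc_atMost)
  finally have "(B + D) ^ p - B ^ p = (\<Sum>k\<in>{1..p}. of_nat (p choose k) * D ^ k * B ^ (p - k))"
    by simp
  also have "fps2_pval_ge (r + 1) \<dots>"
  proof (rule fps2_pval_ge_sum)
    fix k assume k: "k \<in> {1..p}"
    have Bk: "fps2_pval_ge 0 (B ^ (p - k))"
      using fps2_pval_ge_power[OF B] by simp
    show "fps2_pval_ge (r + 1) (of_nat (p choose k) * D ^ k * B ^ (p - k))"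
    proof (cases "k = p")
      case True
      have "r * 2 \<le> r * p"
        using p_gt_1 by simp
      then have "r + 1 \<le> r * p"
        using r by linarith
      then show ?thesis
        using True fps2_pval_ge_mono[OF fps2_pval_ge_power[OF D, of p]] by simp
    next
      case False
      then have "p dvd (p choose k)"
        using k prime_p by (intro dvd_choose_prime) auto
      then have "fps2_pval_ge (1 + r + 0) (of_nat (p choose k) * D ^ k * B ^ (p - k))"
        using k fps2_pval_ge_mono[OF fps2_pval_ge_power[OF D, of k], of r] Bk
        by (intro fps2_pval_ge_mult fps2_pval_ge_of_nat) auto
      then show ?thesis by (simp add: add.commute)
    qed
  qed
  finally show ?thesis .
qed

lemma power_p_power_diff_pval_ge:
  assumes "fps2_pval_ge 0 A" "fps2_pval_ge 0 B" "fps2_pval_ge 1 (A - B)"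
  shows "fps2_pval_ge (t + 1) (A ^ (p ^ t) - B ^ (p ^ t))"
proof (induction t)
  case (Suc t)
  then have "fps2_pval_ge (t + 1 + 1)
      ((B ^ (p ^ t) + (A ^ (p ^ t) - B ^ (p ^ t))) ^ p - (B ^ (p ^ t)) ^ p)"
    using fps2_pval_ge_power[OF assms(2)] by (intro power_p_diff_pval_ge) auto
  then show ?case by (simp add: power_mult[symmetric] mult.commute)
qed (use assms(3) in simp)

section \<open>Series of logarithmic shape\<close>

definition log_shaped :: "fps2 \<Rightarrow> bool" where
  "log_shaped F \<longleftrightarrow> (\<forall>a b. F $ a $ b \<noteq> 0 \<longrightarrow>
     (\<exists>t\<ge>1. ((a, b) = (p ^ t, 0) \<or> (a, b) = (0, p ^ t)) \<and> pint (of_nat p ^ t * F $ a $ b)))"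

lemma log_shaped_zero [simp]: "log_shaped 0"
  by (simp add: log_shaped_def)

lemma log_shaped_add:
  assumes "log_shaped F" "log_shaped G"
  shows "log_shaped (F + G)"
  unfolding log_shaped_def
proof (intro allI impI)
  fix a b
  assume "(F + G) $ a $ b \<noteq> 0"
  show "\<exists>t\<ge>1. ((a, b) = (p ^ t, 0) \<or> (a, b) = (0, p ^ t)) \<and> pint (of_nat p ^ t * (F + G) $ a $ b)"
  proof (cases "F $ a $ b = 0 \<or> G $ a $ b = 0")
    case True
    then show ?thesis
      using assms \<open>(F + G) $ a $ b \<noteq> 0\<close> unfolding log_shaped_def by auto
  next
    case False
    then obtain t s where t: "t \<ge> 1" "(a, b) = (p ^ t, 0) \<or> (a, b) = (0, p ^ t)"
        "pint (of_nat p ^ t * F $ a $ b)"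
      and s: "(a, b) = (p ^ s, 0) \<or> (a, b) = (0, p ^ s)" "pint (of_nat p ^ s * G $ a $ b)"
      using assms unfolding log_shaped_def by blast
    have "p ^ t = p ^ s"
      using t(2) s(1) p_gt_1 by auto
    then have "t = s"
      using p_gt_1 by (simp add: power_inject_exp)
    then show ?thesis
      using t s by (auto simp: distrib_left pint_add)
  qed
qed

lemma log_shaped_sum: "(\<And>s. s \<in> S \<Longrightarrow> log_shaped (f s)) \<Longrightarrow> log_shaped (sum f S)"
  by (induction S rule: infinite_finite_induct) (auto intro: log_shaped_add)

lemma log_shaped_smult2_X1_power:
  "t \<ge> 1 \<Longrightarrow> pint (of_nat p ^ t * c) \<Longrightarrow> log_shaped (smult2 c (X1 ^ (p ^ t)))"
  unfolding log_shaped_def by auto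

lemma log_shaped_smult2_X2_power:
  "t \<ge> 1 \<Longrightarrow> pint (of_nat p ^ t * c) \<Longrightarrow> log_shaped (smult2 c (X2 ^ (p ^ t)))"
  unfolding log_shaped_def by (auto simp: X2_power_nth)

lemma log_shaped_swap2: "log_shaped F \<Longrightarrow> log_shaped (swap2 F)"
  unfolding log_shaped_def by (metis swap2_nth prod.inject)

lemma log_shaped_coeffwise:
  "(\<And>i j. \<exists>G. log_shaped G \<and> F $ i $ j = G $ i $ j) \<Longrightarrow> log_shaped F"
  unfolding log_shaped_def by metis

lemma ord_ge_log_shaped: "log_shaped F \<Longrightarrow> ord_ge 2 F"
proof -
  assume "log_shaped F"
  have "p ^ t \<ge> 2" if "t \<ge> 1" for t
    using p_gt_1 power_increasing[OF that, of p] by simp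
  then show "ord_ge 2 F"
    using \<open>log_shaped F\<close> unfolding log_shaped_def ord_ge_def by fastforce
qed

lemma subst2_log_shaped_cong:
  assumes N: "log_shaped N"
    and A: "fps2_pval_ge 0 A1" "fps2_pval_ge 0 A2" and B: "fps2_pval_ge 0 B1" "fps2_pval_ge 0 B2"
    and AB: "fps2_pval_ge 1 (A1 - B1)" "fps2_pval_ge 1 (A2 - B2)"
  shows "fps2_pval_ge 1 (subst2 N A1 A2 - subst2 N B1 B2)"
  unfolding fps2_pval_ge_def
proof (intro allI)
  fix i j
  have "pval_ge 1 (N $ a $ b * ((A1 ^ a * A2 ^ b) $ i $ j - (B1 ^ a * B2 ^ b) $ i $ j))" for a b
  proof (cases "N $ a $ b = 0")
    case False
    then obtain t where t: "(a, b) = (p ^ t, 0) \<or> (a, b) = (0, p ^ t)"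
      "pint (of_nat p ^ t * N $ a $ b)"
      using N unfolding log_shaped_def by blast
    have "fps2_pval_ge (t + 1) (A1 ^ a * A2 ^ b - B1 ^ a * B2 ^ b)"
      using t(1) power_p_power_diff_pval_ge[OF A(1) B(1) AB(1), of t]
        power_p_power_diff_pval_ge[OF A(2) B(2) AB(2), of t] by auto
    moreover define d where "d = (A1 ^ a * A2 ^ b) $ i $ j - (B1 ^ a * B2 ^ b) $ i $ j"
    ultimately have "pval_ge 0 (of_nat p ^ t * N $ a $ b)" "pval_ge (t + 1) d"
      using t(2) by (auto simp: fps2_pval_ge_def pval_ge_0_iff)
    then have "pval_ge (0 + (t + 1)) (of_nat p ^ t * N $ a $ b * d)"
      by (rule pval_ge_mult)
    moreover have "of_nat p ^ t * N $ a $ b * d / of_nat p ^ (0 + (t + 1))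
        = N $ a $ b * d / of_nat p ^ 1"
      using p_nonzero by (simp add: field_simps)
    ultimately show ?thesis
      unfolding pval_ge_def d_def by simp
  qed simp
  moreover have "(subst2 N A1 A2 - subst2 N B1 B2) $ i $ j = (\<Sum>a\<le>i+j. \<Sum>b\<le>i+j.
      N $ a $ b * ((A1 ^ a * A2 ^ b) $ i $ j - (B1 ^ a * B2 ^ b) $ i $ j))"
    by (simp add: subst2_nth sum_subtractf right_diff_distrib)
  ultimately show "pval_ge 1 ((subst2 N A1 A2 - subst2 N B1 B2) $ i $ j)"
    by (simp add: pval_ge_sum)
qed

text \<open>In the induction on the degree, \<open>P + trunc2 n (G - P)\<close> serves as a \<open>p\<close>-integral stand-in
  for \<open>G\<close>, whose integrality is not known in advance.\<close>

lemma log_equation_cong_mod_p: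
  assumes N: "log_shaped N1" "log_shaped N2"
    and G: "ord_ge 1 G1" "ord_ge 1 G2"
    and P: "ord_ge 1 P1" "ord_ge 1 P2" "fps2_pval_ge 0 P1" "fps2_pval_ge 0 P2"
    and C: "fps2_pval_ge 1 C1" "fps2_pval_ge 1 C2"
    and eq: "G1 - P1 = C1 + (subst2 N1 P1 P2 - subst2 N1 G1 G2)"
      "G2 - P2 = C2 + (subst2 N2 P1 P2 - subst2 N2 G1 G2)"
  shows "fps2_pval_ge 1 (G1 - P1) \<and> fps2_pval_ge 1 (G2 - P2)"
proof -
  have "\<forall>i j. i + j < n \<longrightarrow> pval_ge 1 ((G1 - P1) $ i $ j) \<and> pval_ge 1 ((G2 - P2) $ i $ j)" for n
  proof (induction n)
    case (Suc n)
    define T1 where "T1 = P1 + trunc2 n (G1 - P1)"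
    define T2 where "T2 = P2 + trunc2 n (G2 - P2)"
    have TP: "fps2_pval_ge 1 (T1 - P1)" "fps2_pval_ge 1 (T2 - P2)"
      using Suc.IH by (auto simp: T1_def T2_def fps2_pval_ge_def trunc2_nth)
    have T: "fps2_pval_ge 0 T1" "fps2_pval_ge 0 T2"
      using fps2_pval_ge_add[OF P(3) fps2_pval_ge_mono[OF TP(1)]]
        fps2_pval_ge_add[OF P(4) fps2_pval_ge_mono[OF TP(2)]] by simp_all
    have lT: "ord_ge 1 T1" "ord_ge 1 T2"
      unfolding T1_def T2_def using G P by (simp_all add: ord_ge_add ord_ge_diff ord_ge_trunc2)
    have GT: "ord_ge n (T1 - G1)" "ord_ge n (T2 - G2)"
      by (simp_all add: T1_def T2_def ord_ge_def trunc2_nth)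
    have step: "pval_ge 1 ((C + (subst2 N P1 P2 - subst2 N G1 G2)) $ i $ j)"
      if N: "log_shaped N" and C: "fps2_pval_ge 1 C" and ij: "i + j < Suc n" for N C i j
    proof -
      have "fps2_pval_ge 1 (subst2 N P1 P2 - subst2 N T1 T2)"
        using TP fps2_pval_ge_diff_commute by (blast intro: subst2_log_shaped_cong[OF N P(3,4) T])
      moreover have "ord_ge (n + 1) (subst2 N T1 T2 - subst2 N G1 G2)"
        by (rule ord_ge_subst2_diff[OF GT lT G ord_ge_log_shaped[OF N]])
      then have "(C + (subst2 N P1 P2 - subst2 N G1 G2)) $ i $ j
          = C $ i $ j + (subst2 N P1 P2 - subst2 N T1 T2) $ i $ j"
        using ij by (simp add: ord_ge_def)
      ultimately show ?thesis
        using C by (simp only: fps2_pval_ge_def pval_ge_add)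
    qed
    show ?case
      using step[OF N(1) C(1)] step[OF N(2) C(2)] by (simp add: eq)
  qed simp
  then show ?thesis
    unfolding fps2_pval_ge_def by (meson less_add_one)
qed

section \<open>The Lubin--Tate logarithm\<close>

lemma less_p_power: "0 < h \<Longrightarrow> k < p ^ (m + k * h)"
proof -
  assume "0 < h"
  have "k < 2 ^ k" by simp
  also have "(2::nat) ^ k \<le> p ^ k" using p_gt_1 by (intro power_mono) auto
  also have "p ^ k \<le> p ^ (m + k * h)"
    using p_gt_1 \<open>0 < h\<close> by (intro power_increasing) (auto intro: trans_le_add2)
  finally show ?thesis .
qed

definition lt_log :: "nat \<Rightarrow> nat \<Rightarrow> fps2" where
  "lt_log a b = fps2_of (LT_L1 p a b)"

lemma fps2_of_LT_L2: "fps2_of (LT_L2 p a b) = swap2 (lt_log b a)"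
  by (rule fps2_eqI) (simp add: lt_log_def LT_L1_def LT_L2_def Let_def add.commute conj_commute)

definition lt_log_partial :: "nat \<Rightarrow> nat \<Rightarrow> nat \<Rightarrow> fps2" where
  "lt_log_partial a b n = (\<Sum>k<n.
     smult2 (1 / of_nat p ^ (2 * Suc k)) (X1 ^ p ^ (Suc k * (a + b)))
     + smult2 (1 / of_nat p ^ (2 * k + 1)) (X2 ^ p ^ (a + k * (a + b))))"

lemma lt_log_nth_eq_partial:
  assumes "0 < a + b" "i + j < n"
  shows "lt_log a b $ i $ j = (X1 + lt_log_partial a b n) $ i $ j"
proof -
  define c where "c k = (if i = p ^ (k * (a + b)) \<and> j = 0 then 1 / of_nat p ^ (2 * k) else (0 :: rat))"
    for k
  define d where "d k = (if i = 0 \<and> j = p ^ (a + k * (a + b)) then 1 / of_nat p ^ (2 * k + 1)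
    else (0 :: rat))" for k
  have "c k = 0" if "i < k" for k
    using that less_p_power[OF assms(1), of k 0] by (auto simp: c_def)
  then have "(\<Sum>k\<in>{1..i}. c k) = (\<Sum>k\<in>{1..n}. c k)"
    using assms(2) by (intro sum.mono_neutral_left) auto
  also have "\<dots> = (\<Sum>k<n. c (Suc k))"
    by (simp add: sum.atLeast1_atMost_eq)
  finally have c: "(\<Sum>k\<in>{1..i}. c k) = (\<Sum>k<n. c (Suc k))" .
  have "d k = 0" if "j < k" for k
    using that less_p_power[OF assms(1), of k a] by (auto simp: d_def)
  then have d: "(\<Sum>k\<in>{0..j}. d k) = (\<Sum>k<n. d k)"
    using assms(2) by (intro sum.mono_neutral_left) auto
  have "(X1 + lt_log_partial a b n) $ i $ j
      = (if i = 1 \<and> j = 0 then 1 else 0) + (\<Sum>k<n. c (Suc k) + d k)"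
    unfolding lt_log_partial_def fps_add_nth fps_sum_nth smult2_nth
    by (intro arg_cong2[where f = "(+)"] sum.cong) (auto simp: c_def d_def X2_power_nth)
  then show ?thesis
    using c d by (simp add: lt_log_def LT_L1_def Let_def c_def d_def sum.distrib)
qed

lemma pint_p_power_div: "s \<le> t \<Longrightarrow> pint (of_nat p ^ t * (1 / of_nat p ^ s))"
proof -
  assume "s \<le> t"
  then have "of_nat p ^ t * (1 / of_nat p ^ s) = (of_nat (p ^ (t - s)) :: rat)"
    using p_nonzero by (simp add: field_simps flip: power_add)
  then show ?thesis by (simp only:) (rule pint_of_nat)
qed

lemma log_shaped_lt_log_partial:
  assumes "0 < a" "0 < b"
  shows "log_shaped (lt_log_partial a b n)"
  unfolding lt_log_partial_def
proof (intro log_shaped_sum log_shaped_add)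
  fix k
  have "2 \<le> a + b"
    using assms by simp
  then have k1: "2 * Suc k \<le> Suc k * (a + b)" and "2 * k \<le> k * (a + b)"
    by (metis mult.commute mult_le_mono1)+
  then have "2 * k + 1 \<le> a + k * (a + b)"
    using assms(1) by linarith
  with k1 have kh: "1 \<le> Suc k * (a + b)" "2 * Suc k \<le> Suc k * (a + b)"
      "1 \<le> a + k * (a + b)" "2 * k + 1 \<le> a + k * (a + b)"
    by auto
  show "log_shaped (smult2 (1 / of_nat p ^ (2 * Suc k)) (X1 ^ p ^ (Suc k * (a + b))))"
    using kh by (intro log_shaped_smult2_X1_power pint_p_power_div)
  show "log_shaped (smult2 (1 / of_nat p ^ (2 * k + 1)) (X2 ^ p ^ (a + k * (a + b))))"
    using kh by (intro log_shaped_smult2_X2_power pint_p_power_div)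
qed

lemma log_shaped_lt_log:
  assumes "0 < a" "0 < b"
  shows "log_shaped (lt_log a b - X1)"
proof (rule log_shaped_coeffwise)
  fix i j
  show "\<exists>G. log_shaped G \<and> (lt_log a b - X1) $ i $ j = G $ i $ j"
    using assms lt_log_nth_eq_partial[of a b i j "i + j + 1"]
    by (intro exI[of _ "lt_log_partial a b (i + j + 1)"]) (simp add: log_shaped_lt_log_partial)
qed

text \<open>Multiplying by \<open>p\<close> lowers the exponent of \<open>p\<close> in each denominator by one, and
  substituting \<open>(x2 ^ p ^ a, x1 ^ p ^ b)\<close> maps each monomial to the one of the other variable
  whose coefficient has that lowered denominator; the two sides telescope up to the last term.\<close>

lemma lt_log_partial_equation:
  "smult2 (of_nat p) (X1 + lt_log_partial a b n)
   = smult2 (of_nat p) X1 + subst2 (X1 + lt_log_partial a b n) (X2 ^ p ^ a) (X1 ^ p ^ b)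
     - smult2 (1 / of_nat p ^ (2 * n)) (X2 ^ p ^ (a + n * (a + b)))"
proof -
  define Y where "Y k = X1 ^ p ^ (k * (a + b))" for k
  define Z where "Z k = X2 ^ p ^ (a + k * (a + b))" for k
  define c where "c k = 1 / (of_nat p :: rat) ^ (2 * k)" for k
  define d where "d k = 1 / (of_nat p :: rat) ^ (2 * k + 1)" for k
  have partial: "lt_log_partial a b n = (\<Sum>k<n. smult2 (c (Suc k)) (Y (Suc k)) + smult2 (d k) (Z k))"
    by (simp add: lt_log_partial_def Y_def Z_def c_def d_def)
  have \<Phi>: "ord_ge 1 (X2 ^ p ^ a)" "ord_ge 1 (X1 ^ p ^ b)"
    using p_gt_1 by (simp_all add: ord_ge_X1_power ord_ge_X2_power Suc_leI)
  have YZ: "subst2 (Y k) (X2 ^ p ^ a) (X1 ^ p ^ b) = Z k"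
    "subst2 (Z k) (X2 ^ p ^ a) (X1 ^ p ^ b) = Y (Suc k)" for k
    by (simp_all add: Y_def Z_def subst2_X1_power[OF \<Phi>] subst2_X2_power[OF \<Phi>]
        flip: power_mult power_add) (simp add: algebra_simps)
  have cd: "of_nat p * c (Suc k) = d k" "of_nat p * d k = c k" for k
    using p_nonzero by (simp_all add: c_def d_def field_simps)
  define SY where "SY = (\<Sum>k<n. smult2 (d k) (Y (Suc k)))"
  define SZ where "SZ = (\<Sum>k<n. smult2 (c k) (Z k))"
  have X1Z: "subst2 X1 (X2 ^ p ^ a) (X1 ^ p ^ b) = Z 0"
    by (simp add: Z_def subst2_X1[OF \<Phi>])
  have "subst2 (X1 + lt_log_partial a b n) (X2 ^ p ^ a) (X1 ^ p ^ b)
      = Z 0 + (\<Sum>k<n. smult2 (c (Suc k)) (Z (Suc k))) + SY"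
    by (simp add: partial subst2_add subst2_sum subst2_smult2 YZ X1Z sum.distrib SY_def add.assoc)
  also have "Z 0 + (\<Sum>k<n. smult2 (c (Suc k)) (Z (Suc k))) = SZ + smult2 (c n) (Z n)"
    using sum.lessThan_Suc_shift[of "\<lambda>k. smult2 (c k) (Z k)" n] by (simp add: SZ_def c_def)
  finally have "subst2 (X1 + lt_log_partial a b n) (X2 ^ p ^ a) (X1 ^ p ^ b)
      = SZ + smult2 (c n) (Z n) + SY" .
  moreover have "smult2 (of_nat p) (lt_log_partial a b n) = SY + SZ"
    by (simp add: partial smult2_sum smult2_add_right cd sum.distrib SY_def SZ_def)
  ultimately show ?thesis
    by (simp add: smult2_add_right c_def Z_def)
qed

lemma lt_log_functional_equation:
  assumes "0 < a" "0 < b"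
  shows "smult2 (of_nat p) (lt_log a b)
    = smult2 (of_nat p) X1 + subst2 (lt_log a b) (X2 ^ p ^ a) (X1 ^ p ^ b)"
proof (rule fps2_eq_if_ord_ge)
  fix n
  define D where "D = lt_log a b - (X1 + lt_log_partial a b n)"
  have \<Phi>: "ord_ge 1 (X2 ^ p ^ a)" "ord_ge 1 (X1 ^ p ^ b)"
    using p_gt_1 by (simp_all add: ord_ge_X1_power ord_ge_X2_power Suc_leI)
  have D: "ord_ge n D"
    using assms lt_log_nth_eq_partial[of a b] by (simp add: ord_ge_def D_def)
  have "n \<le> p ^ (a + n * (a + b))"
    using less_p_power[of "a + b" n a] assms by simp
  then have "ord_ge n (smult2 (1 / of_nat p ^ (2 * n)) (X2 ^ p ^ (a + n * (a + b))))"
    by (intro ord_ge_smult2 ord_ge_X2_power)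
  moreover have "smult2 (of_nat p) (lt_log a b)
      - (smult2 (of_nat p) X1 + subst2 (lt_log a b) (X2 ^ p ^ a) (X1 ^ p ^ b))
    = smult2 (of_nat p) D - subst2 D (X2 ^ p ^ a) (X1 ^ p ^ b)
      - smult2 (1 / of_nat p ^ (2 * n)) (X2 ^ p ^ (a + n * (a + b)))"
    using lt_log_partial_equation[of a b n]
    by (simp add: D_def smult2_diff_right subst2_diff smult2_add_right algebra_simps)
  ultimately show "ord_ge n (smult2 (of_nat p) (lt_log a b)
      - (smult2 (of_nat p) X1 + subst2 (lt_log a b) (X2 ^ p ^ a) (X1 ^ p ^ b)))"
    using D by (simp add: ord_ge_diff ord_ge_smult2 ord_ge_subst2[OF \<Phi>])
qed

end

section \<open>Multiplication by \<open>p\<close>\<close>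

locale lubin_tate = p_integrality +
  fixes h1 h2 :: nat
  assumes h1_pos: "0 < h1" and h2_pos: "0 < h2"
begin

definition L1 :: fps2 where "L1 = lt_log h1 h2"
definition L2 :: fps2 where "L2 = swap2 (lt_log h2 h1)"
definition \<Phi>1 :: fps2 where "\<Phi>1 = X2 ^ p ^ h1"
definition \<Phi>2 :: fps2 where "\<Phi>2 = X1 ^ p ^ h2"

lemma fps2_of_LT_L: "fps2_of (fst (LT_L p h1 h2)) = L1" "fps2_of (snd (LT_L p h1 h2)) = L2"
  by (simp_all add: LT_L_def L1_def L2_def lt_log_def fps2_of_LT_L2)

lemma log_shaped_L: "log_shaped (L1 - X1)" "log_shaped (L2 - X2)"
  using log_shaped_lt_log[OF h1_pos h2_pos] log_shaped_swap2[OF log_shaped_lt_log[OF h2_pos h1_pos]]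
  by (simp_all add: L1_def L2_def swap2_diff swap2_X1)

lemma ord_ge_L: "ord_ge 1 L1" "ord_ge 1 L2"
  using ord_ge_add[OF ord_ge_X1 ord_ge_mono[OF ord_ge_log_shaped[OF log_shaped_L(1)]]]
    ord_ge_add[OF ord_ge_X2 ord_ge_mono[OF ord_ge_log_shaped[OF log_shaped_L(2)]]]
  by simp_all

lemma subst2_L:
  assumes "ord_ge 1 A" "ord_ge 1 B"
  shows "subst2 L1 A B = A + subst2 (L1 - X1) A B" "subst2 L2 A B = B + subst2 (L2 - X2) A B"
  by (simp_all add: subst2_diff subst2_X1[OF assms] subst2_X2[OF assms])

lemma ord_ge_\<Phi>: "ord_ge 2 \<Phi>1" "ord_ge 2 \<Phi>2"
  using p_gt_1 h1_pos h2_pos one_less_power[of p h1] one_less_power[of p h2]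
  by (auto simp: \<Phi>1_def \<Phi>2_def intro!: ord_ge_X1_power ord_ge_X2_power)

lemma fps2_pval_ge_\<Phi>: "fps2_pval_ge 0 \<Phi>1" "fps2_pval_ge 0 \<Phi>2"
  by (simp_all add: \<Phi>1_def \<Phi>2_def fps2_pval_ge_X1_power fps2_pval_ge_X2_power)

lemma L_functional_equation:
  "smult2 (of_nat p) L1 = smult2 (of_nat p) X1 + subst2 L1 \<Phi>1 \<Phi>2"
  "smult2 (of_nat p) L2 = smult2 (of_nat p) X2 + subst2 L2 \<Phi>1 \<Phi>2"
proof -
  show "smult2 (of_nat p) L1 = smult2 (of_nat p) X1 + subst2 L1 \<Phi>1 \<Phi>2"
    unfolding L1_def \<Phi>1_def \<Phi>2_def by (rule lt_log_functional_equation[OF h1_pos h2_pos])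
  have "swap2 (smult2 (of_nat p) (lt_log h2 h1))
      = swap2 (smult2 (of_nat p) X1 + subst2 (lt_log h2 h1) (X2 ^ p ^ h2) (X1 ^ p ^ h1))"
    by (rule arg_cong[OF lt_log_functional_equation[OF h2_pos h1_pos]])
  then show "smult2 (of_nat p) L2 = smult2 (of_nat p) X2 + subst2 L2 \<Phi>1 \<Phi>2"
    by (simp add: L2_def swap2_add swap2_smult2 swap2_X1 swap2_subst2 subst2_swap2
        \<Phi>1_def \<Phi>2_def swap2_power swap2_X2)
qed

definition Linv1 :: fps2 where "Linv1 = fps2_of (fst (LT_Linv p h1 h2))"
definition Linv2 :: fps2 where "Linv2 = fps2_of (snd (LT_Linv p h1 h2))"

lemma ord_ge_L_nonlinear: "ord_ge 2 (L1 - X1)" "ord_ge 2 (L2 - X2)"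
  using log_shaped_L by (simp_all add: ord_ge_log_shaped)

lemma LT_Linv_eq:
  assumes M: "ord_ge 1 M1" "ord_ge 1 M2" and inv: "subst2 L1 M1 M2 = X1" "subst2 L2 M1 M2 = X2"
  shows "LT_Linv p h1 h2 = (\<lambda>i j. M1 $ i $ j, \<lambda>i j. M2 $ i $ j)"
  unfolding LT_Linv_def
proof (rule the_equality)
  show "fst (\<lambda>i j. M1 $ i $ j, \<lambda>i j. M2 $ i $ j) 0 0 = 0
    \<and> snd (\<lambda>i j. M1 $ i $ j, \<lambda>i j. M2 $ i $ j) 0 0 = 0
    \<and> pp_comp (LT_L p h1 h2) (\<lambda>i j. M1 $ i $ j, \<lambda>i j. M2 $ i $ j) = pp_X"
    using M inv by (simp add: pp_eq_iff pp_comp_def pp_X_def fps2_of_LT_L flip: ord_ge_1_iff)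
next
  fix Q
  assume Q: "fst Q 0 0 = 0 \<and> snd Q 0 0 = 0 \<and> pp_comp (LT_L p h1 h2) Q = pp_X"
  then have ord_Q: "ord_ge 1 (fps2_of (fst Q))" "ord_ge 1 (fps2_of (snd Q))"
    by (simp_all add: ord_ge_1_iff)
  have "subst2 L1 (fps2_of (fst Q)) (fps2_of (snd Q)) = subst2 L1 M1 M2"
    "subst2 L2 (fps2_of (fst Q)) (fps2_of (snd Q)) = subst2 L2 M1 M2"
    using Q inv by (simp_all add: pp_eq_iff pp_comp_def pp_X_def fps2_of_LT_L)
  then have "fps2_of (fst Q) = M1 \<and> fps2_of (snd Q) = M2"
    using subst2_inverse_unique[OF ord_ge_L_nonlinear ord_Q M] subst2_L[OF ord_Q] subst2_L[OF M]
    by simp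
  then show "Q = (\<lambda>i j. M1 $ i $ j, \<lambda>i j. M2 $ i $ j)"
    by (simp add: pp_eq_iff)
qed

lemma subst2_L_Linv:
  "ord_ge 1 Linv1 \<and> ord_ge 1 Linv2 \<and> subst2 L1 Linv1 Linv2 = X1 \<and> subst2 L2 Linv1 Linv2 = X2"
proof -
  obtain M1 M2 where M: "ord_ge 1 M1" "ord_ge 1 M2"
    "M1 + subst2 (L1 - X1) M1 M2 = X1" "M2 + subst2 (L2 - X2) M1 M2 = X2"
    using subst2_inverse_exists[OF ord_ge_L_nonlinear] by blast
  then have "subst2 L1 M1 M2 = X1" "subst2 L2 M1 M2 = X2"
    by (simp_all add: subst2_L)
  with M show ?thesis
    using LT_Linv_eq by (simp add: Linv1_def Linv2_def)
qed

definition mult1 :: "nat \<Rightarrow> fps2" where "mult1 k = fps2_of (fst (LT_mult p h1 h2 k))"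
definition mult2 :: "nat \<Rightarrow> fps2" where "mult2 k = fps2_of (snd (LT_mult p h1 h2 k))"

lemma mult_Suc_Suc:
  "mult1 (Suc (Suc k)) = subst2 Linv1
     (L1 + subst2 L1 (mult1 (Suc k)) (mult2 (Suc k))) (L2 + subst2 L2 (mult1 (Suc k)) (mult2 (Suc k)))"
  "mult2 (Suc (Suc k)) = subst2 Linv2
     (L1 + subst2 L1 (mult1 (Suc k)) (mult2 (Suc k))) (L2 + subst2 L2 (mult1 (Suc k)) (mult2 (Suc k)))"
  by (simp_all add: mult1_def mult2_def LT_F_def pp_comp_def pp_add_def pp_X_def fps2_of_LT_L
      Linv1_def Linv2_def)

lemma subst2_L_mult:
  "ord_ge 1 (mult1 (Suc k)) \<and> ord_ge 1 (mult2 (Suc k))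
   \<and> subst2 L1 (mult1 (Suc k)) (mult2 (Suc k)) = smult2 (of_nat (Suc k)) L1
   \<and> subst2 L2 (mult1 (Suc k)) (mult2 (Suc k)) = smult2 (of_nat (Suc k)) L2"
proof (induction k)
  case 0
  show ?case
    using ord_ge_X1 ord_ge_X2 by (simp add: mult1_def mult2_def pp_X_def)
next
  case (Suc k)
  define S1 where "S1 = smult2 (of_nat (Suc (Suc k))) L1"
  define S2 where "S2 = smult2 (of_nat (Suc (Suc k))) L2"
  have S: "ord_ge 1 S1" "ord_ge 1 S2"
    using ord_ge_L by (simp_all add: S1_def S2_def ord_ge_smult2)
  have "L1 + smult2 (of_nat (Suc k)) L1 = S1" "L2 + smult2 (of_nat (Suc k)) L2 = S2"
    using smult2_add_left[of 1 L1] smult2_add_left[of 1 L2] by (simp_all add: S1_def S2_def)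
  then have mult: "mult1 (Suc (Suc k)) = subst2 Linv1 S1 S2" "mult2 (Suc (Suc k)) = subst2 Linv2 S1 S2"
    using Suc.IH by (simp_all add: mult_Suc_Suc)
  have "subst2 L1 (subst2 Linv1 S1 S2) (subst2 Linv2 S1 S2) = S1"
    "subst2 L2 (subst2 Linv1 S1 S2) (subst2 Linv2 S1 S2) = S2"
    using subst2_L_Linv S by (simp_all add: subst2_X1 subst2_X2 flip: subst2_subst2)
  moreover have "ord_ge 1 (subst2 Linv1 S1 S2)" "ord_ge 1 (subst2 Linv2 S1 S2)"
    using subst2_L_Linv by (simp_all add: ord_ge_1_iff subst2_const_coeff)
  ultimately show ?case
    by (simp add: mult S1_def S2_def)
qed

lemma mult_p_congruences:
  "ord_ge 2 (mult1 p - smult2 (of_nat p) X1) \<and> ord_ge 2 (mult2 p - smult2 (of_nat p) X2)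
   \<and> fps2_pval_ge 1 (mult1 p - \<Phi>1) \<and> fps2_pval_ge 1 (mult2 p - \<Phi>2)"
proof -
  define G1 G2 where "G1 = mult1 p" and "G2 = mult2 p"
  have G: "ord_ge 1 G1" "ord_ge 1 G2" "subst2 L1 G1 G2 = smult2 (of_nat p) L1"
    "subst2 L2 G1 G2 = smult2 (of_nat p) L2"
    using subst2_L_mult[of "p - 1"] p_gt_1 by (simp_all add: G1_def G2_def)
  have \<Phi>: "ord_ge 1 \<Phi>1" "ord_ge 1 \<Phi>2"
    using ord_ge_\<Phi> by (auto elim: ord_ge_mono)
  have eq: "G1 - \<Phi>1 = smult2 (of_nat p) X1 + (subst2 (L1 - X1) \<Phi>1 \<Phi>2 - subst2 (L1 - X1) G1 G2)"
    "G2 - \<Phi>2 = smult2 (of_nat p) X2 + (subst2 (L2 - X2) \<Phi>1 \<Phi>2 - subst2 (L2 - X2) G1 G2)"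
    using G L_functional_equation subst2_L[OF G(1,2)] subst2_L[OF \<Phi>] by (simp_all add: algebra_simps)
  have C: "fps2_pval_ge 1 (smult2 (of_nat p) X1)" "fps2_pval_ge 1 (smult2 (of_nat p) X2)"
    by (rule fps2_pval_ge_smult2_p[OF fps2_pval_ge_X1], rule fps2_pval_ge_smult2_p[OF fps2_pval_ge_X2])
  have cong: "fps2_pval_ge 1 (G1 - \<Phi>1) \<and> fps2_pval_ge 1 (G2 - \<Phi>2)"
    by (rule log_equation_cong_mod_p[OF log_shaped_L G(1,2) \<Phi> fps2_pval_ge_\<Phi> C eq])
  have "ord_ge 2 (subst2 (L1 - X1) \<Phi>1 \<Phi>2 - subst2 (L1 - X1) G1 G2)"
    "ord_ge 2 (subst2 (L2 - X2) \<Phi>1 \<Phi>2 - subst2 (L2 - X2) G1 G2)"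
    using log_shaped_L G \<Phi> by (simp_all add: ord_ge_diff ord_ge_subst2 ord_ge_log_shaped)
  moreover have "G1 - smult2 (of_nat p) X1
      = \<Phi>1 + (subst2 (L1 - X1) \<Phi>1 \<Phi>2 - subst2 (L1 - X1) G1 G2)"
    "G2 - smult2 (of_nat p) X2 = \<Phi>2 + (subst2 (L2 - X2) \<Phi>1 \<Phi>2 - subst2 (L2 - X2) G1 G2)"
    using eq by (simp_all add: algebra_simps)
  ultimately have "ord_ge 2 (G1 - smult2 (of_nat p) X1)" "ord_ge 2 (G2 - smult2 (of_nat p) X2)"
    using ord_ge_\<Phi> by (simp_all add: ord_ge_add)
  with cong show ?thesis
    by (simp add: G1_def G2_def)
qed

end

theorem proposition3p6:
  fixes p h1 h2 :: nat
  assumes "prime p" and "h1 > 0" and "h2 > 0" and "coprime h1 h2"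
  shows "pp_p_integral p (LT_mult p h1 h2 p)
    \<and> pp_cong_deg2 (LT_mult p h1 h2 p) (ps_smult (of_nat p) ps_X1, ps_smult (of_nat p) ps_X2)
    \<and> pp_cong_mod_p p (LT_mult p h1 h2 p) (ps_pow ps_X2 (p ^ h1), ps_pow ps_X1 (p ^ h2))
    \<and> LT_mult p h1 h2 p \<in> C_LT p h1 h2"
proof -
  interpret lubin_tate p h1 h2
    using assms by unfold_locales
  have "fps2_pval_ge 0 (mult1 p)" "fps2_pval_ge 0 (mult2 p)"
    using fps2_pval_ge_\<Phi> mult_p_congruences fps2_pval_ge_add fps2_pval_ge_mono[of 1 _ 0]
    by fastforce+
  then have "pp_p_integral p (LT_mult p h1 h2 p)"
    and "pp_cong_deg2 (LT_mult p h1 h2 p) (ps_smult (of_nat p) ps_X1, ps_smult (of_nat p) ps_X2)"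
    and "pp_cong_mod_p p (LT_mult p h1 h2 p) (ps_pow ps_X2 (p ^ h1), ps_pow ps_X1 (p ^ h2))"
    using mult_p_congruences
    by (simp_all add: pp_p_integral_iff pp_cong_deg2_iff pp_cong_mod_p_iff mult1_def mult2_def
        \<Phi>1_def \<Phi>2_def)
  then show ?thesis
    by (simp add: C_LT_def)
qed

end
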